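(* For every density operator $\rho$ on $\mathbb{C}^d$, $C_{\mathcal{F}}(\rho)\le\frac1d 2^{\mu_d(\rho)}$, where $\mu_d(\rho)=D_{\max}(\rho\,\|\,\Delta(\rho))$.
   Context: Fix the computational basis $\{|i\rangle\}_{i=0}^{d-1}$ of $\mathbb{C}^d$ as the incoherent basis and $\Delta(\rho)=\sum_i|i\rangle\langle i|\rho|i\rangle\langle i|$. A maximally coherent state is a pure state $\frac1{\sqrt d}\sum_{i}e^{\mathrm{i}\theta_i}|i\rangle$; the quantum coherence fraction is $C_{\mathcal{F}}(\rho)=\max_{|\phi\rangle\text{ maximally coherent}}\langle\phi|\rho|\phi\rangle$. The max-relative entropy is $D_{\max}(\rho\|\sigma)=\min\{\gamma\in\mathbb{R}:\rho\le 2^{\gamma}\sigma\}$ (logarithm base 2), so $\mu_d(\rho)=\min\{\gamma:\rho\le2^\gamma\Delta(\rho)\}$. *)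

theory Defs
  imports "HOL-Analysis.Analysis"
begin

text \<open>Operators on C^d are d x d complex matrices indexed by a finite type 'n, d = CARD('n).
  The computational basis is the standard basis.\<close>

definition qform :: "complex^'n^'n \<Rightarrow> complex^'n \<Rightarrow> complex" where
  "qform A v = (\<Sum>i\<in>UNIV. \<Sum>j\<in>UNIV. cnj (v $ i) * A $ i $ j * v $ j)"

definition psd :: "complex^'n^'n \<Rightarrow> bool" where
  "psd A \<longleftrightarrow> (\<forall>v. qform A v \<in> \<real> \<and> 0 \<le> Re (qform A v))"

definition loewner_le :: "complex^'n^'n \<Rightarrow> complex^'n^'n \<Rightarrow> bool" where
  "loewner_le A B \<longleftrightarrow> psd (B - A)"

definition density :: "complex^'n^'n \<Rightarrow> bool" where
  "density \<rho> \<longleftrightarrow> psd \<rho> \<and> trace \<rho> = 1"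

definition dephase :: "complex^'n^'n \<Rightarrow> complex^'n^'n" where
  "dephase \<rho> = (\<chi> i j. if i = j then \<rho> $ i $ j else 0)"

definition D_max :: "complex^'n^'n \<Rightarrow> complex^'n^'n \<Rightarrow> real" where
  "D_max \<rho> \<sigma> = Inf {\<gamma>::real. loewner_le \<rho> ((2 powr \<gamma>) *\<^sub>R \<sigma>)}"

definition mu_d :: "complex^'n^'n \<Rightarrow> real" where
  "mu_d \<rho> = D_max \<rho> (dephase \<rho>)"

definition max_coh :: "('n::finite \<Rightarrow> real) \<Rightarrow> complex^'n" where
  "max_coh \<theta> = (\<chi> i. exp (\<i> * complex_of_real (\<theta> i)) / complex_of_real (sqrt (real CARD('n))))"

text \<open>Coherence fraction: maximum of <phi|rho|phi> over maximally coherent phi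
  (these values are real for a density operator).\<close>
definition coh_fraction :: "complex^'n::finite^'n \<Rightarrow> real" where
  "coh_fraction \<rho> = Sup {Re (qform \<rho> (max_coh \<theta>)) | \<theta>. True}"

end

theory Submission
  imports Defs
begin

text \<open>For a maximally coherent \<phi> one has <\<phi>|\<Delta>(\<rho>)|\<phi>> = tr \<rho> / d = 1/d, so every \<gamma> with
  \<rho> \<le> 2^\<gamma> \<Delta>(\<rho>) gives <\<phi>|\<rho>|\<phi>> \<le> 2^\<gamma> / d, and the bound survives the infimum over \<gamma>.
  That infimum is taken over a nonempty set because \<rho> \<le> d \<Delta>(\<rho>): positivity of \<rho> on
  v_i e_i - v_j e_j bounds each pair of off-diagonal terms of <v|\<rho>|v> by diagonal ones,
  and summing over all d^2 pairs gives <v|\<rho>|v> \<le> d <v|\<Delta>(\<rho>)|v>.\<close>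

lemma qform_diff: "qform (A - B) v = qform A v - qform B v"
  unfolding qform_def by (simp add: sum_subtractf algebra_simps)

lemma qform_scaleR: "qform (c *\<^sub>R A) v = of_real c * qform A v"
  unfolding qform_def
  by (simp only: vector_scaleR_component) (simp add: sum_distrib_left scaleR_conv_of_real algebra_simps)

lemma sum_mult_axis:
  fixes i :: "'n::finite" and a :: "'a::semiring_0"
  shows "(\<Sum>j\<in>UNIV. f j * axis i a $ j) = f i * a"
proof -
  have "(\<lambda>j. f j * axis i a $ j) = (\<lambda>j. if j = i then f j * a else 0)"
    by (auto simp: axis_def)
  then show ?thesis by (simp only:) simp
qed

lemma sum_cnj_axis_mult:
  fixes i :: "'n::finite"
  shows "(\<Sum>j\<in>UNIV. cnj (axis i a $ j) * f j) = cnj a * f i"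
proof -
  have "(\<lambda>j. cnj (axis i a $ j) * f j) = (\<lambda>j. if j = i then cnj a * f j else 0)"
    by (auto simp: axis_def)
  then show ?thesis by (simp only:) simp
qed

lemma sum_sum_axis:
  "(\<Sum>k\<in>UNIV. \<Sum>l\<in>UNIV. cnj (axis p x $ k) * A$k$l * axis q y $ l) = cnj x * A$p$q * y"
  by (simp only: sum_mult_axis) (simp only: mult.assoc sum_cnj_axis_mult)

lemma qform_axis: "qform A (axis i a) = cnj a * A$i$i * a"
  unfolding qform_def by (rule sum_sum_axis)

lemma qform_axis_add:
  "qform A (axis i a + axis j b)
    = cnj a * A$i$i * a + cnj a * A$i$j * b + cnj b * A$j$i * a + cnj b * A$j$j * b"
  unfolding qform_def vector_add_component complex_cnj_add distrib_left distrib_right sum.distrib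
  by (simp only: sum_sum_axis) (simp only: ac_simps)

lemma qform_dephase: "qform (dephase A) v = (\<Sum>i\<in>UNIV. cnj (v$i) * A$i$i * v$i)"
proof -
  have "(\<Sum>j\<in>UNIV. cnj (v$i) * dephase A $ i $ j * v$j) = cnj (v$i) * A$i$i * v$i" for i
  proof -
    have "(\<lambda>j. cnj (v$i) * dephase A $ i $ j * v$j) = (\<lambda>j. if j = i then cnj (v$i) * A$i$i * v$i else 0)"
      by (auto simp: dephase_def)
    then show ?thesis by (simp only:) simp
  qed
  then show ?thesis unfolding qform_def by simp
qed

lemma cnj_mult_self: "cnj a * x * a = of_real ((cmod a)\<^sup>2) * x"
  by (metis complex_norm_square mult.commute mult.left_commute)

lemma psd_diag_real: "psd A \<Longrightarrow> A$i$i \<in> \<real>"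
  using qform_axis[of A i 1] unfolding psd_def by (metis mult_1 mult_1_right complex_cnj_one)

lemma psd_cross_terms_le:
  assumes "psd A"
  shows "Re (cnj (v$i) * A$i$j * v$j) + Re (cnj (v$j) * A$j$i * v$i)
     \<le> (cmod (v$i))\<^sup>2 * Re (A$i$i) + (cmod (v$j))\<^sup>2 * Re (A$j$j)"
proof -
  have "0 \<le> Re (qform A (axis i (v$i) + axis j (- v$j)))"
    using assms unfolding psd_def by blast
  also have "\<dots> = (cmod (v$i))\<^sup>2 * Re (A$i$i) + (cmod (v$j))\<^sup>2 * Re (A$j$j)
     - (Re (cnj (v$i) * A$i$j * v$j) + Re (cnj (v$j) * A$j$i * v$i))"
    unfolding qform_axis_add by (simp add: cnj_mult_self del: of_real_power)
  finally show ?thesis by simp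
qed

lemma psd_Re_qform_le_card_dephase:
  fixes A :: "complex^'n::finite^'n"
  assumes "psd A"
  shows "Re (qform A v) \<le> real CARD('n) * Re (qform (dephase A) v)"
proof -
  define D where "D i = (cmod (v$i))\<^sup>2 * Re (A$i$i)" for i
  define T where "T i j = Re (cnj (v$i) * A$i$j * v$j)" for i j
  have "Re (qform A v) = (\<Sum>i\<in>UNIV. \<Sum>j\<in>UNIV. T i j)"
    unfolding qform_def T_def by (simp add: Re_sum)
  also have "\<dots> = (1/2) * ((\<Sum>i\<in>UNIV. \<Sum>j\<in>UNIV. T i j) + (\<Sum>i\<in>UNIV. \<Sum>j\<in>UNIV. T j i))"
    using sum.swap[of T UNIV UNIV] by simp
  also have "\<dots> = (1/2) * (\<Sum>i\<in>UNIV. \<Sum>j\<in>UNIV. T i j + T j i)"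
    by (simp add: sum.distrib)
  also have "\<dots> \<le> (1/2) * (\<Sum>i\<in>UNIV. \<Sum>j\<in>UNIV. D i + D j)"
    using psd_cross_terms_le[OF assms, of v] unfolding T_def D_def
    by (intro mult_left_mono sum_mono) auto
  also have "\<dots> = real CARD('n) * (\<Sum>i\<in>UNIV. D i)"
    by (simp add: sum.distrib sum.swap[of "\<lambda>i j. D j"] sum_distrib_left)
  also have "(\<Sum>i\<in>UNIV. D i) = Re (qform (dephase A) v)"
    unfolding qform_dephase D_def cnj_mult_self by (simp add: Re_sum del: of_real_power)
  finally show ?thesis .
qed

lemma psd_qform_dephase_real: "psd A \<Longrightarrow> qform (dephase A) v \<in> \<real>"
  unfolding qform_dephase cnj_mult_self by (auto intro!: sum_in_Reals Reals_mult psd_diag_real)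

lemma psd_loewner_le_card_dephase:
  fixes A :: "complex^'n::finite^'n"
  assumes "psd A"
  shows "loewner_le A (real CARD('n) *\<^sub>R dephase A)"
  unfolding loewner_le_def psd_def qform_diff qform_scaleR
  using assms psd_Re_qform_le_card_dephase[OF assms] psd_qform_dephase_real[OF assms]
  by (auto simp: psd_def)

text \<open>Some exponent must be admissible: otherwise D_max is the junk value Inf {}.\<close>
lemma Re_qform_le_D_max:
  assumes admissible: "loewner_le \<rho> ((2 powr \<gamma>\<^sub>0) *\<^sub>R \<sigma>)"
    and nonneg: "0 \<le> Re (qform \<sigma> v)"
  shows "Re (qform \<rho> v) \<le> 2 powr (D_max \<rho> \<sigma>) * Re (qform \<sigma> v)"
proof -
  define S where "S = {\<gamma>::real. loewner_le \<rho> ((2 powr \<gamma>) *\<^sub>R \<sigma>)}"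
  define q where "q = Re (qform \<rho> v)"
  define s where "s = Re (qform \<sigma> v)"
  have q_le: "q \<le> 2 powr \<gamma> * s" if "\<gamma> \<in> S" for \<gamma>
  proof -
    have "0 \<le> Re (qform ((2 powr \<gamma>) *\<^sub>R \<sigma> - \<rho>) v)"
      using that unfolding S_def loewner_le_def psd_def by blast
    then show ?thesis unfolding qform_diff qform_scaleR q_def s_def by simp
  qed
  show ?thesis
  proof (cases "q > 0")
    case False
    then show ?thesis using nonneg unfolding q_def by (smt (verit) mult_nonneg_nonneg powr_ge_zero)
  next
    case True
    have "\<gamma>\<^sub>0 \<in> S" using admissible unfolding S_def by simp
    with q_le True have "s > 0"
      by (smt (verit) mult_nonneg_nonpos powr_ge_zero)
    have "log 2 (q / s) \<le> Inf S"
    proof (rule cInf_greatest)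
      show "S \<noteq> {}" using \<open>\<gamma>\<^sub>0 \<in> S\<close> by blast
    next
      fix \<gamma> assume "\<gamma> \<in> S"
      then show "log 2 (q / s) \<le> \<gamma>"
        using q_le[of \<gamma>] True \<open>s > 0\<close> by (simp add: log_le_iff pos_divide_le_eq)
    qed
    then have "q / s \<le> 2 powr (D_max \<rho> \<sigma>)"
      using True \<open>s > 0\<close> unfolding D_max_def S_def by (simp add: log_le_iff)
    then show ?thesis using \<open>s > 0\<close> unfolding q_def s_def by (simp add: pos_divide_le_eq)
  qed
qed

lemma qform_dephase_max_coh:
  fixes A :: "complex^'n::finite^'n"
  shows "qform (dephase A) (max_coh \<theta>) = trace A / of_nat CARD('n)"
proof -
  have "(cmod (max_coh \<theta> $ i))\<^sup>2 = 1 / real CARD('n)" for i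
    unfolding max_coh_def by (simp add: norm_divide power_divide)
  then show ?thesis
    unfolding qform_dephase cnj_mult_self trace_def by (simp add: sum_divide_distrib)
qed

theorem mainTheorem6:
  fixes \<rho> :: "complex^'n::finite^'n"
  assumes "density \<rho>"
  shows "coh_fraction \<rho> \<le> (1 / real CARD('n)) * 2 powr (mu_d \<rho>)"
proof -
  have psd: "psd \<rho>" and trace: "trace \<rho> = 1"
    using assms unfolding density_def by auto
  have admissible: "loewner_le \<rho> ((2 powr log 2 (real CARD('n))) *\<^sub>R dephase \<rho>)"
    using psd_loewner_le_card_dephase[OF psd] by simp
  have "Re (qform \<rho> (max_coh \<theta>)) \<le> (1 / real CARD('n)) * 2 powr (mu_d \<rho>)" for \<theta>
    using Re_qform_le_D_max[OF admissible, of "max_coh \<theta>"]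
    unfolding mu_d_def qform_dephase_max_coh trace by simp
  then show ?thesis
    unfolding coh_fraction_def by (intro cSup_least) auto
qed

end
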